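(* Let $q$ be a prime power, let $n,m\ge 1$ and $k$ be integers with $k^m\equiv 1 \pmod n$ and $k^t\not\equiv 1\pmod n$ for $1\le t\le m-1$, and let $$G_1=\langle x,y\mid x^m=y^n=1,\ x^{-1}yx=y^k\rangle .$$ Order the $mn$ elements of $G_1$ so that the element $x^jy^i$ ($0\le i\le n-1$, $0\le j\le m-1$) is in position $1+i+nj$, and identify $\mathbb{F}_qG_1$ with $\mathbb{F}_q^{mn}$ via $\Psi$ with respect to this ordering. Let $v\in\mathbb{F}_qG_1$ and let $C(v)\subseteq\mathbb{F}_q^{mn}$ be the code generated by the rows of $\sigma_{G_1}(v)$. Suppose $(b_1,b_2,\dots,b_{mn})\in C(v)$. For $0\le j\le m-1$ put $\mathbf{b}_{j+1}'=(b_{1+nj},b_{2+nj},\dots,b_{n+nj})\in\mathbb{F}_q^n$ and $\mathbf{b}_{j+1}=T_n^{[k^j]_n}(\mathbf{b}_{j+1}')$. Then the concatenations $(\mathbf{b}_1,\mathbf{b}_2,\dots,\mathbf{b}_m)$ and $T_m(\mathbf{b}_1',\mathbf{b}_2',\dots,\mathbf{b}_m')=(\mathbf{b}_m',\mathbf{b}_1',\dots,\mathbf{b}_{m-1}')$ are also codewords of $C(v)$.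
   Context: For a finite group $G=\{g_1,\dots,g_N\}$ with a fixed ordering, $\mathbb{F}_qG$ is the group ring, and $\Psi:\mathbb{F}_qG\to\mathbb{F}_q^N$ sends $v=\sum_{i}\alpha_{g_i}g_i$ to $(\alpha_{g_1},\dots,\alpha_{g_N})$. The group ring matrix $\sigma_G(v)$ is the $N\times N$ matrix whose $(i,j)$ entry is $\alpha_{g_i^{-1}g_j}$; $C(v)$ denotes the row space of $\sigma_G(v)$. For a tuple $(c_1,\dots,c_r)$ (of scalars or of vectors), $T_r(c_1,\dots,c_r)=(c_r,c_1,\dots,c_{r-1})$ is the cyclic shift, and $T_r^s$ is its $s$-th iterate. For integers $a$ and $n\ge1$, $[a]_n$ denotes the smallest positive integer $a'$ with $a\equiv a'\pmod n$. *)

theory Defs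
  imports "Jordan_Normal_Form.Matrix" "HOL-Algebra.Group" "HOL-Number_Theory.Cong"
begin

text \<open>Concrete model of the metacyclic group
  G1 = <x,y | x^m = y^n = 1, x^-1 y x = y^k>:
  the pair (i,j) with i < n, j < m stands for the element x^j y^i.
  Since y x = x y^k we have (x^j y^i)(x^j' y^i') = x^(j+j') y^(i k^j' + i').\<close>

definition G1 :: "nat \<Rightarrow> nat \<Rightarrow> int \<Rightarrow> (nat \<times> nat) monoid" where
  "G1 n m k = \<lparr> carrier = {(i, j). i < n \<and> j < m},
      mult = (\<lambda>(i, j) (i', j'). (nat ((int i * k ^ j' + int i') mod int n), (j + j') mod m)),
      one = (0, 0) \<rparr>"

text \<open>The ordering of G1: 0-based position p corresponds to x^(p div n) y^(p mod n),
  i.e. x^j y^i is at (1-based) position 1 + i + n j.\<close>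

definition G1_elem :: "nat \<Rightarrow> nat \<Rightarrow> nat \<times> nat" where
  "G1_elem n p = (p mod n, p div n)"

text \<open>Group ring matrix sigma_G(v) for a group G with ordering g_0,...,g_(N-1);
  the element v of F_q G is given by its coefficient function alpha.\<close>

definition group_ring_matrix ::
  "('g, 'b) monoid_scheme \<Rightarrow> (nat \<Rightarrow> 'g) \<Rightarrow> nat \<Rightarrow> ('g \<Rightarrow> 'a) \<Rightarrow> 'a mat" where
  "group_ring_matrix G g N alpha =
     mat N N (\<lambda>(a, b). alpha (inv\<^bsub>G\<^esub> (g a) \<otimes>\<^bsub>G\<^esub> (g b)))"

definition row_space :: "'a::comm_ring_1 mat \<Rightarrow> 'a vec set" where
  "row_space A = {transpose_mat A *\<^sub>v c | c. c \<in> carrier_vec (dim_row A)}"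

definition Tshift :: "'x list \<Rightarrow> 'x list" where
  "Tshift xs = (if xs = [] then [] else last xs # butlast xs)"

definition Tvec :: "'a vec \<Rightarrow> 'a vec" where
  "Tvec c = vec_of_list (Tshift (list_of_vec c))"

definition bracket :: "int \<Rightarrow> nat \<Rightarrow> nat" where
  "bracket a n = (if a mod int n = 0 then n else nat (a mod int n))"

text \<open>The j-th block (0-based) b'_(j+1) = (b_(1+nj), ..., b_(n+nj)).\<close>

definition block :: "nat \<Rightarrow> 'a vec \<Rightarrow> nat \<Rightarrow> 'a vec" where
  "block n b j = vec n (\<lambda>i. b $ (i + n * j))"

definition concat_vecs :: "'a vec list \<Rightarrow> 'a vec" where
  "concat_vecs vs = vec_of_list (concat (map list_of_vec vs))"

end

theory Submission
  imports Defs
begin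

(* Row g of sigma(v) is the coefficient vector of g v, so C(v) consists of the coefficient
   vectors of the left ideal F_q G v and is invariant under the coordinate permutation induced by
   left multiplication with any group element. Since y x^j = x^j y^(k^j), multiplying by y moves
   the coefficient of x^j y^i to x^j y^(i + k^j), i.e. rotates the j-th block by [k^j]_n places;
   multiplying by x moves it to x^(j+1) y^i, i.e. rotates the blocks. *)

lemma row_space_permute_invariant:
  fixes A :: "'a::comm_ring_1 mat"
  assumes A: "A \<in> carrier_mat N N" and \<tau>: "bij_betw \<tau> {0..<N} {0..<N}"
    and invariant: "\<And>a p. a < N \<Longrightarrow> p < N \<Longrightarrow> A $$ (\<tau> a, \<tau> p) = A $$ (a, p)"
    and b: "b \<in> row_space A"
  shows "vec N (\<lambda>p. b $ \<tau> p) \<in> row_space A"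
proof -
  have entry: "(transpose_mat A *\<^sub>v w) $ p = (\<Sum>a\<in>{0..<N}. A $$ (a, p) * w $ a)"
    if "w \<in> carrier_vec N" "p < N" for w p
    using A that by (simp add: scalar_prod_def)
  obtain c where c: "c \<in> carrier_vec N" and bc: "b = transpose_mat A *\<^sub>v c"
    using b A by (auto simp: row_space_def)
  define c' where "c' = vec N (\<lambda>a. c $ \<tau> a)"
  have \<tau>N: "\<tau> p < N" if "p < N" for p
    using \<tau> that by (auto simp: bij_betw_def)
  have "vec N (\<lambda>p. b $ \<tau> p) = transpose_mat A *\<^sub>v c'"
  proof (rule eq_vecI)
    fix p assume "p < dim_vec (transpose_mat A *\<^sub>v c')"
    then have p: "p < N" using A by simp
    have "b $ \<tau> p = (\<Sum>a\<in>{0..<N}. A $$ (a, \<tau> p) * c $ a)"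
      unfolding bc using c \<tau>N[OF p] by (rule entry)
    also have "\<dots> = (\<Sum>a\<in>{0..<N}. A $$ (\<tau> a, \<tau> p) * c $ \<tau> a)"
      using sum.reindex_bij_betw[OF \<tau>, of "\<lambda>a. A $$ (a, \<tau> p) * c $ a"] by simp
    also have "\<dots> = (\<Sum>a\<in>{0..<N}. A $$ (a, p) * c' $ a)"
      using p by (simp add: invariant c'_def)
    also have "\<dots> = (transpose_mat A *\<^sub>v c') $ p"
      using p by (simp add: entry c'_def)
    finally show "vec N (\<lambda>p. b $ \<tau> p) $ p = (transpose_mat A *\<^sub>v c') $ p"
      using p by simp
  qed (use A in simp)
  then show ?thesis
    using A by (auto simp: row_space_def c'_def)
qed

lemma group_ring_matrix_left_translate:
  fixes G (structure)
  assumes "group G" and g: "bij_betw g {0..<N} (carrier G)" and s: "s \<in> carrier G"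
    and \<tau>: "\<And>p. p < N \<Longrightarrow> \<tau> p < N \<and> g (\<tau> p) = s \<otimes> g p"
    and b: "b \<in> row_space (group_ring_matrix G g N v)"
  shows "vec N (\<lambda>p. b $ \<tau> p) \<in> row_space (group_ring_matrix G g N v)"
proof (rule row_space_permute_invariant[OF _ _ _ b])
  interpret group G by fact
  have gG: "g p \<in> carrier G" if "p < N" for p
    using g that by (auto simp: bij_betw_def)
  have "inj_on \<tau> {0..<N}"
  proof (rule inj_onI)
    fix p q assume "p \<in> {0..<N}" "q \<in> {0..<N}" "\<tau> p = \<tau> q"
    then have "g p = g q" using \<tau> s gG by (metis atLeastLessThan_iff Units_eq Units_l_cancel)
    then show "p = q" using g \<open>p \<in> _\<close> \<open>q \<in> _\<close> by (auto simp: bij_betw_def inj_on_def)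
  qed
  moreover have "\<tau> ` {0..<N} \<subseteq> {0..<N}"
    using \<tau> by auto
  ultimately show "bij_betw \<tau> {0..<N} {0..<N}"
    using endo_inj_surj[of "{0..<N}" \<tau>] by (simp add: bij_betw_def)
  have "inv (s \<otimes> x) \<otimes> (s \<otimes> y) = inv x \<otimes> y" if "x \<in> carrier G" "y \<in> carrier G" for x y
    using that s by (simp add: inv_mult_group m_assoc flip: m_assoc[of "inv s"])
  then show "group_ring_matrix G g N v $$ (\<tau> a, \<tau> p) = group_ring_matrix G g N v $$ (a, p)"
    if "a < N" "p < N" for a p
    using that \<tau> gG by (simp add: group_ring_matrix_def)
qed (simp add: group_ring_matrix_def)

lemma cong_pow_mod_exponent:
  fixes k :: int
  assumes "[k ^ m = 1] (mod n)"
  shows "[k ^ a = k ^ (a mod m)] (mod n)"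
proof -
  have "[(k ^ m) ^ (a div m) * k ^ (a mod m) = 1 ^ (a div m) * k ^ (a mod m)] (mod n)"
    using assms by (intro cong_mult cong_pow cong_refl)
  then show ?thesis
    by (simp flip: power_mult power_add)
qed

lemma nat_mod_eq_if_cong:
  "[a = b] (mod int n) \<Longrightarrow> nat (a mod int n) = nat (b mod int n)"
  by (simp add: cong_def)

lemma position_mod_div_less:
  fixes p m n :: nat
  assumes "p < m * n"
  shows "p mod n < n" and "p div n < m"
proof -
  have "n > 0"
    using assms by (cases n) auto
  then show "p mod n < n" by simp
  show "p div n < m"
    using assms by (rule less_mult_imp_div_less)
qed

lemma Tshift_eq_rotate: "Tshift xs = rotate (length xs - 1) xs"
  by (cases xs rule: rev_cases) (simp_all add: Tshift_def rotate_append)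

lemma length_Tshift [simp]: "length (Tshift xs) = length xs"
  by (simp add: Tshift_eq_rotate)

lemma set_Tshift [simp]: "set (Tshift xs) = set xs"
  by (simp add: Tshift_eq_rotate)

lemma nth_Tshift:
  "i < length xs \<Longrightarrow> Tshift xs ! i = xs ! ((length xs - 1 + i) mod length xs)"
  by (simp add: Tshift_eq_rotate nth_rotate)

(* Entry i of (Tvec ^^ s) c is c_(i - s); adding s (n - 1) instead avoids subtraction on nat. *)
lemma Tvec_funpow:
  assumes "dim_vec c = n"
  shows "(Tvec ^^ s) c = vec n (\<lambda>i. c $ ((s * (n - 1) + i) mod n))"
proof -
  have "(Tvec ^^ s) c = vec_of_list (rotate (s * (n - 1)) (list_of_vec c))"
  proof (induction s)
    case (Suc s)
    then show ?case
      using assms by (simp add: Tvec_def Tshift_eq_rotate rotate_rotate list_vec)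
  qed (simp add: vec_list)
  then show ?thesis
    using assms by (intro eq_vecI) (simp_all add: vec_of_list_index nth_rotate)
qed

lemma nth_concat_equal_length:
  assumes "\<forall>xs\<in>set xss. length xs = n" "p < length xss * n"
  shows "concat xss ! p = xss ! (p div n) ! (p mod n)"
  using assms
proof (induction xss arbitrary: p)
  case (Cons xs xss)
  show ?case
  proof (cases "p < n")
    case False
    moreover have "n > 0"
      using Cons.prems by (cases n) auto
    ultimately have "p div n = Suc ((p - n) div n)" "p mod n = (p - n) mod n"
      by (simp_all add: le_div_geq le_mod_geq)
    with False Cons show ?thesis by (simp add: nth_append)
  qed (use Cons.prems in \<open>simp add: nth_append\<close>)
qed simp

lemma concat_vecs_eq_vec:
  assumes "\<forall>w\<in>set vs. dim_vec w = n"
  shows "concat_vecs vs = vec (length vs * n) (\<lambda>p. (vs ! (p div n)) $ (p mod n))"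
proof -
  have lengths: "\<forall>xs\<in>set (map list_of_vec vs). length xs = n"
    using assms by simp
  have "length (concat (map list_of_vec vs)) = length vs * n"
    using assms by (induction vs) auto
  with assms show ?thesis
    by (intro eq_vecI)
      (auto simp: concat_vecs_def vec_of_list_index nth_concat_equal_length[OF lengths]
        position_mod_div_less[of _ "length vs" n])
qed

lemma G1_mult:
  "(i, j) \<otimes>\<^bsub>G1 n m k\<^esub> (i', j') = (nat ((int i * k ^ j' + int i') mod int n), (j + j') mod m)"
  by (simp add: G1_def)

lemma G1_carrier: "carrier (G1 n m k) = {(i, j). i < n \<and> j < m}"
  by (simp add: G1_def)

lemma G1_one: "\<one>\<^bsub>G1 n m k\<^esub> = (0, 0)"
  by (simp add: G1_def)

lemma G1_mult_assoc:
  assumes n: "n \<ge> 1" and km: "[k ^ m = 1] (mod int n)"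
  shows "(i, j) \<otimes>\<^bsub>G1 n m k\<^esub> (i', j') \<otimes>\<^bsub>G1 n m k\<^esub> (i'', j'')
       = (i, j) \<otimes>\<^bsub>G1 n m k\<^esub> ((i', j') \<otimes>\<^bsub>G1 n m k\<^esub> (i'', j''))"
proof -
  let ?c = "int i * k ^ (j' + j'') + int i' * k ^ j'' + int i''"
  have "[(int i * k ^ j' + int i') mod int n * k ^ j'' + int i''
       = (int i * k ^ j' + int i') * k ^ j'' + int i''] (mod int n)"
    by (intro cong_add cong_mult cong_refl) simp
  then have "[(int i * k ^ j' + int i') mod int n * k ^ j'' + int i'' = ?c] (mod int n)"
    by (simp add: power_add algebra_simps)
  then have left: "(i, j) \<otimes>\<^bsub>G1 n m k\<^esub> (i', j') \<otimes>\<^bsub>G1 n m k\<^esub> (i'', j'')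
      = (nat (?c mod int n), (j + j' + j'') mod m)"
    using n by (simp add: G1_mult nat_mod_eq_if_cong mod_add_left_eq)
  have "[int i * k ^ ((j' + j'') mod m) + (int i' * k ^ j'' + int i'')
       = int i * k ^ (j' + j'') + (int i' * k ^ j'' + int i'')] (mod int n)"
    using cong_pow_mod_exponent[OF km, of "j' + j''"]
    by (intro cong_add cong_mult cong_refl) (simp add: cong_sym)
  then have "[int i * k ^ ((j' + j'') mod m) + (int i' * k ^ j'' + int i'') = ?c] (mod int n)"
    by (simp add: algebra_simps)
  then have right: "(i, j) \<otimes>\<^bsub>G1 n m k\<^esub> ((i', j') \<otimes>\<^bsub>G1 n m k\<^esub> (i'', j''))
      = (nat (?c mod int n), (j + j' + j'') mod m)"
    using n by (simp add: G1_mult nat_mod_eq_if_cong mod_add_right_eq add.assoc)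
  show ?thesis
    by (simp only: left right)
qed

lemma G1_left_inverse:
  assumes n: "n \<ge> 1" and km: "[k ^ m = 1] (mod int n)" and j: "j < m"
  defines "j' \<equiv> (m - j) mod m"
  shows "(nat ((- int i * k ^ j') mod int n), j') \<otimes>\<^bsub>G1 n m k\<^esub> (i, j) = (0, 0)"
proof -
  let ?i' = "nat ((- int i * k ^ j') mod int n)"
  have j'j: "(j' + j) mod m = 0"
    using j by (cases "j = 0") (auto simp: j'_def)
  have "[int ?i' = - int i * k ^ j'] (mod int n)"
    using n by (simp add: cong_def)
  then have "[int ?i' * k ^ j + int i = - int i * k ^ j' * k ^ j + int i] (mod int n)"
    by (intro cong_add cong_mult cong_refl)
  also have "- int i * k ^ j' * k ^ j + int i = - int i * k ^ (j' + j) + int i"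
    by (simp add: power_add)
  also have "[- int i * k ^ (j' + j) + int i = - int i * k ^ ((j' + j) mod m) + int i] (mod int n)"
    using cong_pow_mod_exponent[OF km] by (intro cong_add cong_mult cong_refl)
  finally have "(int ?i' * k ^ j + int i) mod int n = 0"
    using j'j by (simp add: cong_def)
  then show ?thesis
    using j'j by (simp add: G1_mult)
qed

lemma G1_group:
  assumes n: "n \<ge> 1" and m: "m \<ge> 1" and km: "[k ^ m = 1] (mod int n)"
  shows "group (G1 n m k)"
proof (rule groupI)
  fix x y assume "x \<in> carrier (G1 n m k)" "y \<in> carrier (G1 n m k)"
  then show "x \<otimes>\<^bsub>G1 n m k\<^esub> y \<in> carrier (G1 n m k)"
    using n m by (auto simp: G1_mult G1_carrier nat_less_iff)
next
  show "\<one>\<^bsub>G1 n m k\<^esub> \<in> carrier (G1 n m k)"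
    using n m by (simp add: G1_one G1_carrier)
next
  fix x assume "x \<in> carrier (G1 n m k)"
  then show "\<one>\<^bsub>G1 n m k\<^esub> \<otimes>\<^bsub>G1 n m k\<^esub> x = x"
    by (auto simp: G1_one G1_mult G1_carrier)
next
  fix x y z :: "nat \<times> nat"
  show "x \<otimes>\<^bsub>G1 n m k\<^esub> y \<otimes>\<^bsub>G1 n m k\<^esub> z = x \<otimes>\<^bsub>G1 n m k\<^esub> (y \<otimes>\<^bsub>G1 n m k\<^esub> z)"
    using G1_mult_assoc[OF n km] by (cases x, cases y, cases z) simp
next
  fix x assume "x \<in> carrier (G1 n m k)"
  then obtain i j where x: "x = (i, j)" and j: "j < m"
    by (auto simp: G1_carrier)
  have "nat ((- int i * k ^ ((m - j) mod m)) mod int n) < n" "(m - j) mod m < m"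
    using n m by (simp_all add: nat_less_iff)
  then show "\<exists>y\<in>carrier (G1 n m k). y \<otimes>\<^bsub>G1 n m k\<^esub> x = \<one>\<^bsub>G1 n m k\<^esub>"
    using G1_left_inverse[OF n km j, of i] by (auto simp: G1_carrier G1_one x)
qed

lemma G1_elem_add_mult:
  assumes "i < n" "j < m"
  shows "i + n * j < m * n" and "G1_elem n (i + n * j) = (i, j)"
proof -
  have "i + n * j < n * Suc j" using assms(1) by simp
  also have "\<dots> \<le> n * m" using assms(2) by (intro mult_le_mono2) simp
  finally show "i + n * j < m * n" by (simp add: mult.commute)
  show "G1_elem n (i + n * j) = (i, j)"
    using assms(1) by (simp add: G1_elem_def)
qed

lemma G1_elem_bij: "bij_betw (G1_elem n) {0..<m * n} (carrier (G1 n m k))"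
proof (rule bij_betw_byWitness[where f' = "\<lambda>(i, j). i + n * j"])
  show "\<forall>p\<in>{0..<m * n}. (case G1_elem n p of (i, j) \<Rightarrow> i + n * j) = p"
    by (simp add: G1_elem_def)
  show "\<forall>x\<in>carrier (G1 n m k). G1_elem n (case x of (i, j) \<Rightarrow> i + n * j) = x"
    by (auto simp: G1_carrier G1_elem_add_mult)
  show "G1_elem n ` {0..<m * n} \<subseteq> carrier (G1 n m k)"
    by (auto simp: G1_elem_def G1_carrier position_mod_div_less)
  show "(\<lambda>(i, j). i + n * j) ` carrier (G1 n m k) \<subseteq> {0..<m * n}"
    by (auto simp: G1_carrier G1_elem_add_mult)
qed

(* (n - 1, 0) is y^-1, and y^-1 x^j = x^j y^(-k^j). *)
lemma G1_left_mult_y_inv: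
  assumes "n \<ge> 1" "i < n" "j < m"
  shows "(n - 1, 0) \<otimes>\<^bsub>G1 n m k\<^esub> (i, j) = ((bracket (k ^ j) n * (n - 1) + i) mod n, j)"
proof -
  have "[int (bracket (k ^ j) n) = k ^ j] (mod int n)"
    using assms(1) by (simp add: bracket_def cong_def)
  then have "[int (bracket (k ^ j) n) * (int n - 1) + int i = k ^ j * (int n - 1) + int i] (mod int n)"
    by (intro cong_add cong_mult cong_refl)
  then have "int ((bracket (k ^ j) n * (n - 1) + i) mod n) = ((int n - 1) * k ^ j + int i) mod int n"
    using assms(1) by (simp add: cong_def of_nat_mod of_nat_diff mult.commute)
  then show ?thesis
    using assms by (simp add: G1_mult of_nat_diff flip: nat_int)
qed

lemma G1_elem_left_mult_y_inv:
  fixes k :: int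
  assumes "n \<ge> 1" "p < m * n"
  defines "p' \<equiv> (bracket (k ^ (p div n)) n * (n - 1) + p mod n) mod n + n * (p div n)"
  shows "p' < m * n \<and> G1_elem n p' = (n - 1, 0) \<otimes>\<^bsub>G1 n m k\<^esub> G1_elem n p"
proof -
  have i: "p mod n < n" and j: "p div n < m"
    using position_mod_div_less[OF assms(2)] .
  have "(bracket (k ^ (p div n)) n * (n - 1) + p mod n) mod n < n"
    using assms(1) by simp
  with j have "p' < m * n \<and> G1_elem n p' = ((bracket (k ^ (p div n)) n * (n - 1) + p mod n) mod n, p div n)"
    unfolding p'_def by (simp add: G1_elem_add_mult)
  moreover have "(n - 1, 0) \<otimes>\<^bsub>G1 n m k\<^esub> G1_elem n p
      = ((bracket (k ^ (p div n)) n * (n - 1) + p mod n) mod n, p div n)"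
    unfolding G1_elem_def by (rule G1_left_mult_y_inv[OF assms(1) i j])
  ultimately show ?thesis
    by simp
qed

lemma G1_elem_left_mult_x_inv:
  assumes "p < m * n"
  defines "p' \<equiv> p mod n + n * ((m - 1 + p div n) mod m)"
  shows "p' < m * n \<and> G1_elem n p' = (0, m - 1) \<otimes>\<^bsub>G1 n m k\<^esub> G1_elem n p"
proof -
  have i: "p mod n < n" and j: "p div n < m"
    using position_mod_div_less[OF assms(1)] .
  then have "(m - 1 + p div n) mod m < m"
    by simp
  with i show ?thesis
    unfolding p'_def by (simp add: G1_elem_add_mult G1_mult G1_elem_def add.commute)
qed

lemma concat_vecs_Tvec_blocks:
  "concat_vecs (map (\<lambda>j. (Tvec ^^ r j) (block n b j)) [0..<m])
     = vec (m * n) (\<lambda>p. b $ ((r (p div n) * (n - 1) + p mod n) mod n + n * (p div n)))"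
proof -
  let ?blocks = "map (\<lambda>j. (Tvec ^^ r j) (block n b j)) [0..<m]"
  have dims: "\<forall>w\<in>set ?blocks. dim_vec w = n"
    by (auto simp: block_def Tvec_funpow)
  have "?blocks ! (p div n) $ (p mod n) = b $ ((r (p div n) * (n - 1) + p mod n) mod n + n * (p div n))"
    if "p < m * n" for p
  proof -
    have "0 < n"
      using that by (cases n) auto
    with that show ?thesis
      by (simp add: block_def Tvec_funpow position_mod_div_less)
  qed
  then show ?thesis
    by (auto simp: concat_vecs_eq_vec[OF dims])
qed

lemma concat_vecs_Tshift_blocks:
  "concat_vecs (Tshift (map (block n b) [0..<m]))
     = vec (m * n) (\<lambda>p. b $ (p mod n + n * ((m - 1 + p div n) mod m)))"
proof -
  let ?blocks = "Tshift (map (block n b) [0..<m])"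
  have dims: "\<forall>w\<in>set ?blocks. dim_vec w = n"
    by (auto simp: block_def)
  have "?blocks ! (p div n) $ (p mod n) = b $ (p mod n + n * ((m - 1 + p div n) mod m))"
    if "p < m * n" for p
  proof -
    have "0 < m"
      using that by (cases m) auto
    with that show ?thesis
      by (simp add: block_def nth_Tshift position_mod_div_less)
  qed
  then show ?thesis
    by (auto simp: concat_vecs_eq_vec[OF dims])
qed

theorem theorem3p1:
  fixes n m :: nat and k :: int
    and v :: "nat \<times> nat \<Rightarrow> 'a::{finite, field}"
    and b :: "'a vec"
  assumes "n \<ge> 1" and "m \<ge> 1"
    and "[k ^ m = 1] (mod int n)"
    and "\<forall>t. 1 \<le> t \<and> t \<le> m - 1 \<longrightarrow> \<not> [k ^ t = 1] (mod int n)"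
    and "b \<in> row_space (group_ring_matrix (G1 n m k) (G1_elem n) (m * n) v)"
  shows "concat_vecs (map (\<lambda>j. (Tvec ^^ bracket (k ^ j) n) (block n b j)) [0..<m])
           \<in> row_space (group_ring_matrix (G1 n m k) (G1_elem n) (m * n) v)
    \<and> concat_vecs (Tshift (map (block n b) [0..<m]))
           \<in> row_space (group_ring_matrix (G1 n m k) (G1_elem n) (m * n) v)"
proof -
  note translate = group_ring_matrix_left_translate[OF G1_group[OF assms(1-3)] G1_elem_bij _ _ assms(5)]
  have "(n - 1, 0) \<in> carrier (G1 n m k)" "(0, m - 1) \<in> carrier (G1 n m k)"
    using assms(1,2) by (simp_all add: G1_carrier)
  from translate[OF this(1) G1_elem_left_mult_y_inv[OF assms(1)]]
       translate[OF this(2) G1_elem_left_mult_x_inv]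
  show ?thesis
    by (simp add: concat_vecs_Tvec_blocks concat_vecs_Tshift_blocks)
qed

end
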